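(* The $\Sigma_1$-theory $\mathcal{T}_\varsigma$ is not smooth with respect to $\{\sigma\}$.
   Context: $\varsigma:\mathbb{N}\to\mathbb{N}$ is the Busy Beaver function: $\varsigma(n)$ is the maximum number of $1$'s that a halting Turing machine with at most $n$ states can leave on its tape, starting from an all-$0$ tape. $\Sigma_1$ is the empty signature (only equality, interpreted as identity) with one sort $\sigma$. Let $\psi_{\ge n}=\exists x_1\dots x_n.\bigwedge_{1\le i<j\le n}\neg(x_i=x_j)$, $\psi_{\le n}=\exists x_1\dots x_n\forall y.\bigvee_{i=1}^n y=x_i$, $\psi_{=n}=\psi_{\ge n}\wedge\psi_{\le n}$. $\mathcal{T}_\varsigma$ is the $\Sigma_1$-theory (class of all $\Sigma_1$-interpretations satisfying the axioms) axiomatized by $\{\psi_{\ge\varsigma(k+2)}\vee\bigvee_{i=2}^{k+2}\psi_{=\varsigma(i)}:k\in\mathbb{N}\}$. A theory $\mathcal{T}$ is smooth w.r.t. $\{\sigma\}$ if for every quantifier-free formula $\phi$, every $\mathcal{T}$-interpretation $\mathcal{A}$ satisfying $\phi$, and every cardinal $\kappa\ge|\sigma^{\mathcal{A}}|$, some $\mathcal{T}$-interpretation $\mathcal{B}$ satisfies $\phi$ with $|\sigma^{\mathcal{B}}|=\kappa$. *)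

theory Defs
  imports Main "HOL-Library.Equipollence"
begin

text \<open>Two-symbol (0 = False, 1 = True) Turing machines on a two-way infinite tape
  (indexed by int). A machine with m states has states 1..m and the halting
  state 0; state 1 is the start state. The transition table maps (state, read
  symbol) to (written symbol, move right?, next state).\<close>

type_synonym tm = "nat \<Rightarrow> bool \<Rightarrow> bool \<times> bool \<times> nat"
type_synonym tm_config = "nat \<times> int \<times> (int \<Rightarrow> bool)"

definition tm_valid :: "nat \<Rightarrow> tm \<Rightarrow> bool" where
  "tm_valid m M \<longleftrightarrow> (\<forall>q\<in>{1..m}. \<forall>s. snd (snd (M q s)) \<le> m)"

definition tm_step :: "tm \<Rightarrow> tm_config \<Rightarrow> tm_config" where
  "tm_step M c = (case c of (q, h, t) \<Rightarrow>
     if q = 0 then (q, h, t)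
     else (case M q (t h) of (w, d, q') \<Rightarrow>
             (q', if d then h + 1 else h - 1, t(h := w))))"

definition tm_run :: "tm \<Rightarrow> nat \<Rightarrow> tm_config" where
  "tm_run M k = (tm_step M ^^ k) (1, 0, (\<lambda>_. False))"

definition tm_ones :: "tm_config \<Rightarrow> nat" where
  "tm_ones c = card {i. snd (snd c) i}"

text \<open>Busy Beaver: maximum number of 1's left by a halting machine with at most n states
  started on the all-0 tape (the 0-state case contributes 0).\<close>
definition busy_beaver :: "nat \<Rightarrow> nat" where
  "busy_beaver n = Max ({0} \<union> {tm_ones (tm_run M k) | m M k.
       1 \<le> m \<and> m \<le> n \<and> tm_valid m M \<and> fst (tm_run M k) = 0})"

datatype qf_formula = QEq nat nat | QNot qf_formula | QAnd qf_formula qf_formula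
  | QOr qf_formula qf_formula

fun qf_sat :: "(nat \<Rightarrow> 'a) \<Rightarrow> qf_formula \<Rightarrow> bool" where
  "qf_sat v (QEq x y) = (v x = v y)"
| "qf_sat v (QNot p) = (\<not> qf_sat v p)"
| "qf_sat v (QAnd p q) = (qf_sat v p \<and> qf_sat v q)"
| "qf_sat v (QOr p q) = (qf_sat v p \<or> qf_sat v q)"

definition is_interp :: "'a set \<Rightarrow> (nat \<Rightarrow> 'a) \<Rightarrow> bool" where
  "is_interp D v \<longleftrightarrow> D \<noteq> {} \<and> range v \<subseteq> D"

text \<open>Semantics of the cardinality sentences (literal unfolding).\<close>
definition psi_ge :: "'a set \<Rightarrow> nat \<Rightarrow> bool" where
  "psi_ge D n \<longleftrightarrow> (\<exists>x. (\<forall>i\<in>{1..n}. x i \<in> D) \<and> inj_on x {1..n})"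

definition psi_le :: "'a set \<Rightarrow> nat \<Rightarrow> bool" where
  "psi_le D n \<longleftrightarrow> (\<exists>x. (\<forall>i\<in>{1..n}. x i \<in> D) \<and> (\<forall>y\<in>D. \<exists>i\<in>{1..n}. y = x i))"

definition psi_eq :: "'a set \<Rightarrow> nat \<Rightarrow> bool" where
  "psi_eq D n \<longleftrightarrow> psi_ge D n \<and> psi_le D n"

definition T_bb_interp :: "'a set \<Rightarrow> (nat \<Rightarrow> 'a) \<Rightarrow> bool" where
  "T_bb_interp D v \<longleftrightarrow> is_interp D v \<and>
     (\<forall>k::nat. psi_ge D (busy_beaver (k + 2)) \<or>
               (\<exists>i\<in>{2..k+2}. psi_eq D (busy_beaver i)))"

text \<open>Smoothness w.r.t. the single sort, relative to interpretations whose domains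
  live in the type 'a; cardinals are represented by subsets K of 'a.\<close>
definition smooth_T_bb :: "'a itself \<Rightarrow> bool" where
  "smooth_T_bb _ \<longleftrightarrow>
     (\<forall>\<phi> (D::'a set) v. T_bb_interp D v \<and> qf_sat v \<phi> \<longrightarrow>
        (\<forall>K::'a set. D \<lesssim> K \<longrightarrow>
           (\<exists>(D'::'a set) v'. T_bb_interp D' v' \<and> qf_sat v' \<phi> \<and> D' \<approx> K)))"

end

theory Submission
  imports Defs
begin

(* A finite model of T_varsigma whose size is below varsigma(n) has size varsigma(i) for
   some 2 <= i <= n. A Turing machine with L + 6 states that turns a block of L ones into a
   block of 2L ones shows varsigma(L + 6) >= 2L. For L = varsigma(2) + 5 the open interval
   between varsigma(2) and varsigma(L + 6) therefore contains more numbers than there are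
   values varsigma(3), ..., varsigma(L + 5), so some size m in it is skipped: the model of
   size varsigma(2) satisfies x = x, but no model of size m exists. *)

section \<open>Runs of Turing machines\<close>

lemma tm_step_halted: "fst c = 0 \<Longrightarrow> tm_step M c = c"
  by (cases c) (auto simp: tm_step_def)

lemma funpow_tm_step_halted: "fst c = 0 \<Longrightarrow> (tm_step M ^^ j) c = c"
  by (induction j) (auto simp: tm_step_halted)

lemma tm_run_add: "tm_run M (k + j) = (tm_step M ^^ j) (tm_run M k)"
  by (simp add: tm_run_def funpow_add add.commute)

lemma tm_run_Suc: "tm_run M (Suc k) = tm_step M (tm_run M k)"
  by (simp add: tm_run_def)

lemma tm_run_halted_unique:
  assumes "fst (tm_run M k) = 0" "fst (tm_run M k') = 0"
  shows "tm_run M k = tm_run M k'"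
proof -
  have later: "tm_run M j = tm_run M i" if "fst (tm_run M i) = 0" "i \<le> j" for i j
  proof -
    obtain d where "j = i + d" using \<open>i \<le> j\<close> le_Suc_ex by blast
    then show ?thesis using that(1) by (simp add: tm_run_add funpow_tm_step_halted)
  qed
  show ?thesis
    using later[OF assms(1), of k'] later[OF assms(2), of k] by (cases "k \<le> k'") auto
qed

lemma tm_run_state_le:
  assumes "tm_valid m M" "1 \<le> m"
  shows "fst (tm_run M k) \<le> m"
proof (induction k)
  case 0
  show ?case using assms by (simp add: tm_run_def)
next
  case (Suc k)
  obtain q h t where c: "tm_run M k = (q, h, t)" by (cases "tm_run M k")
  show ?case
  proof (cases "q = 0")
    case True
    then show ?thesis using c by (simp add: tm_run_Suc tm_step_def)
  next
    case False
    then have "q \<in> {1..m}" using Suc c by auto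
    then have "snd (snd (M q (t h))) \<le> m" using assms(1) by (simp add: tm_valid_def)
    then show ?thesis
      using c False by (auto simp: tm_run_Suc tm_step_def split: prod.splits)
  qed
qed

text \<open>Forgetting the transition table outside the states 1..m does not change the run, and
  makes the machines with m states a finite set.\<close>

definition tm_restrict :: "nat \<Rightarrow> tm \<Rightarrow> tm" where
  "tm_restrict m M = (\<lambda>q. if q \<in> {1..m} then M q else undefined)"

lemma tm_run_restrict:
  assumes "tm_valid m M" "1 \<le> m"
  shows "tm_run (tm_restrict m M) k = tm_run M k"
proof (induction k)
  case 0
  show ?case by (simp add: tm_run_def)
next
  case (Suc k)
  have "fst (tm_run M k) \<le> m"
    using tm_run_state_le[OF assms] .
  then have "tm_step (tm_restrict m M) (tm_run M k) = tm_step M (tm_run M k)"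
    by (cases "tm_run M k") (auto simp: tm_step_def tm_restrict_def)
  then show ?case
    using Suc by (simp add: tm_run_Suc)
qed

definition tm_machines :: "nat \<Rightarrow> tm set" where
  "tm_machines m = {1..m} \<rightarrow>\<^sub>E (UNIV \<rightarrow>\<^sub>E UNIV \<times> UNIV \<times> {0..m})"

lemma finite_tm_machines: "finite (tm_machines m)"
  unfolding tm_machines_def by (intro finite_PiE) auto

lemma tm_restrict_in_machines: "tm_valid m M \<Longrightarrow> tm_restrict m M \<in> tm_machines m"
  unfolding tm_machines_def tm_restrict_def tm_valid_def PiE_def Pi_def extensional_def
  by (auto simp: mem_Times_iff)

definition tm_halting_ones :: "tm \<Rightarrow> nat set" where
  "tm_halting_ones M = {tm_ones (tm_run M k) | k. fst (tm_run M k) = 0}"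

lemma finite_tm_halting_ones: "finite (tm_halting_ones M)"
proof (cases "\<exists>k. fst (tm_run M k) = 0")
  case True
  then obtain k where halts: "fst (tm_run M k) = 0" by blast
  have "tm_halting_ones M \<subseteq> {tm_ones (tm_run M k)}"
  proof
    fix x
    assume "x \<in> tm_halting_ones M"
    then obtain j where "x = tm_ones (tm_run M j)" "fst (tm_run M j) = 0"
      unfolding tm_halting_ones_def by blast
    with halts show "x \<in> {tm_ones (tm_run M k)}"
      by (metis singletonI tm_run_halted_unique)
  qed
  then show ?thesis
    by (rule finite_subset) simp
next
  case False
  then have "tm_halting_ones M = {}"
    by (auto simp: tm_halting_ones_def)
  then show ?thesis by simp
qed

lemma finite_busy_beaver_candidates:
  "finite {tm_ones (tm_run M k) | m M k.
     1 \<le> m \<and> m \<le> n \<and> tm_valid m M \<and> fst (tm_run M k) = 0}"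
proof (rule finite_subset)
  show "{tm_ones (tm_run M k) | m M k.
      1 \<le> m \<and> m \<le> n \<and> tm_valid m M \<and> fst (tm_run M k) = 0}
    \<subseteq> (\<Union>m\<in>{1..n}. \<Union>R\<in>tm_machines m. tm_halting_ones R)"
  proof clarify
    fix m M k
    assume m: "1 \<le> m" "m \<le> n" and valid: "tm_valid m M" and halts: "fst (tm_run M k) = 0"
    let ?R = "tm_restrict m M"
    have "tm_ones (tm_run M k) \<in> tm_halting_ones ?R"
      using halts unfolding tm_halting_ones_def tm_run_restrict[OF valid m(1)] by blast
    moreover have "?R \<in> tm_machines m"
      using valid by (rule tm_restrict_in_machines)
    ultimately show "tm_ones (tm_run M k) \<in> (\<Union>m\<in>{1..n}. \<Union>R\<in>tm_machines m. tm_halting_ones R)"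
      using m by auto
  qed
qed (simp add: finite_tm_machines finite_tm_halting_ones)

lemma le_busy_beaver:
  assumes "1 \<le> m" "m \<le> n" "tm_valid m M" "fst (tm_run M k) = 0"
  shows "tm_ones (tm_run M k) \<le> busy_beaver n"
  unfolding busy_beaver_def
  by (rule Max_ge) (use finite_busy_beaver_candidates[of n] assms in blast)+

lemma one_le_busy_beaver:
  assumes "1 \<le> n"
  shows "1 \<le> busy_beaver n"
proof -
  let ?M = "\<lambda>(q::nat) (s::bool). (True, True, 0::nat)"
  have run: "tm_run ?M 1 = (0, 1, (\<lambda>_. False)(0 := True))"
    by (simp add: tm_run_def tm_step_def)
  then have "tm_ones (tm_run ?M 1) = 1"
    by (simp add: tm_ones_def)
  moreover have "tm_ones (tm_run ?M 1) \<le> busy_beaver n"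
    by (rule le_busy_beaver[of 1]) (use run assms in \<open>auto simp: tm_valid_def\<close>)
  ultimately show ?thesis by simp
qed

definition tm_reach :: "tm \<Rightarrow> tm_config \<Rightarrow> tm_config \<Rightarrow> bool" where
  "tm_reach M c c' \<longleftrightarrow> (\<exists>n. (tm_step M ^^ n) c = c')"

lemma tm_reach_refl: "tm_reach M c c"
  unfolding tm_reach_def by (metis funpow_0)

lemma tm_reach_trans [trans]: "tm_reach M a b \<Longrightarrow> tm_reach M b c \<Longrightarrow> tm_reach M a c"
  unfolding tm_reach_def by (metis funpow_add comp_apply)

lemma tm_reach_imp_run: "tm_reach M (1, 0, \<lambda>_. False) c \<Longrightarrow> \<exists>k. tm_run M k = c"
  unfolding tm_reach_def tm_run_def by blast

lemma tm_reach_step: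
  assumes "q \<noteq> 0" "M q (t h) = (w, d, q')"
    and "h' = (if d then h + 1 else h - 1)" "t' = t(h := w)"
  shows "tm_reach M (q, h, t) (q', h', t')"
  unfolding tm_reach_def using assms
  by (intro exI[of _ 1]) (simp add: tm_step_def)

lemma tm_reach_scan_right:
  assumes "q \<noteq> 0" "M q True = (True, True, q)"
    and "h \<le> h'" "\<forall>i. h \<le> i \<and> i < h' \<longrightarrow> t i"
  shows "tm_reach M (q, h, t) (q, h', t)"
proof -
  obtain n where "h' = h + int n"
    using \<open>h \<le> h'\<close> zle_iff_zadd by blast
  with assms(4) show ?thesis
  proof (induction n arbitrary: h)
    case 0
    then show ?case by (simp add: tm_reach_refl)
  next
    case (Suc n)
    then have "t h" by simp
    have "tm_reach M (q, h, t) (q, h + 1, t)"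
      by (rule tm_reach_step) (use assms \<open>t h\<close> in \<open>auto simp: fun_upd_idem\<close>)
    also have "tm_reach M \<dots> (q, h', t)"
      by (rule Suc.IH) (use Suc.prems in auto)
    finally show ?case .
  qed
qed

lemma tm_reach_scan_left:
  assumes "q \<noteq> 0" "M q True = (True, False, q)"
    and "h' \<le> h" "\<forall>i. h' < i \<and> i \<le> h \<longrightarrow> t i"
  shows "tm_reach M (q, h, t) (q, h', t)"
proof -
  obtain n where "h = h' + int n"
    using \<open>h' \<le> h\<close> zle_iff_zadd by blast
  with assms(4) show ?thesis
  proof (induction n arbitrary: h)
    case 0
    then show ?case by (simp add: tm_reach_refl)
  next
    case (Suc n)
    then have "t h" by simp
    have "tm_reach M (q, h, t) (q, h - 1, t)"
      by (rule tm_reach_step) (use assms \<open>t h\<close> in \<open>auto simp: fun_upd_idem\<close>)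
    also have "tm_reach M \<dots> (q, h', t)"
      by (rule Suc.IH) (use Suc.prems in auto)
    finally show ?case .
  qed
qed

section \<open>A machine doubling a block of ones\<close>

text \<open>States 1..L write ones on the cells 0..L-1. Each round of the states L+1..L+6 erases
  the leftmost one of this block and appends two ones to a second block starting at cell
  L+1; \<^term>\<open>doubler_tape L p\<close> is the tape after p rounds. State L+2 halts once the
  first block is empty.\<close>

definition doubler :: "nat \<Rightarrow> tm" where
  "doubler L q s =
    (if 1 \<le> q \<and> q \<le> L then (True, True, if q = L then L + 6 else q + 1)
     else if q = L + 1 then (if s then (True, False, L + 1) else (False, True, L + 2))
     else if q = L + 2 then (if s then (False, True, L + 3) else (False, True, 0))
     else if q = L + 3 then (if s then (True, True, L + 3) else (False, True, L + 4))
     else if q = L + 4 then (if s then (True, True, L + 4) else (True, True, L + 5))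
     else if q = L + 5 then (True, False, L + 6)
     else if q = L + 6 then (if s then (True, False, L + 6) else (False, False, L + 1))
     else (False, False, 0))"

definition doubler_tape :: "nat \<Rightarrow> nat \<Rightarrow> int \<Rightarrow> bool" where
  "doubler_tape L p x \<longleftrightarrow>
     int p \<le> x \<and> x < int L \<or> int L + 1 \<le> x \<and> x < int L + 1 + 2 * int p"

lemma doubler_valid: "tm_valid (L + 6) (doubler L)"
  unfolding tm_valid_def doubler_def by simp

lemma doubler_writes_block:
  assumes "1 \<le> L"
  shows "tm_reach (doubler L) (1, 0, \<lambda>_. False) (L + 6, int L, doubler_tape L 0)"
proof -
  let ?block = "\<lambda>i x. 0 \<le> x \<and> x < int i"
  have "tm_reach (doubler L) (1, 0, \<lambda>_. False) (i + 1, int i, ?block i)" if "i < L" for i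
    using that
  proof (induction i)
    case 0
    have "?block 0 = (\<lambda>_. False)" by auto
    then show ?case by (simp add: tm_reach_refl)
  next
    case (Suc i)
    then have "tm_reach (doubler L) (1, 0, \<lambda>_. False) (i + 1, int i, ?block i)"
      by simp
    also have "tm_reach (doubler L) \<dots> (Suc i + 1, int (Suc i), ?block (Suc i))"
      by (rule tm_reach_step[where w=True and d=True])
        (use Suc.prems in \<open>auto simp: doubler_def fun_eq_iff\<close>)
    finally show ?case .
  qed
  from this[of "L - 1"] assms
  have "tm_reach (doubler L) (1, 0, \<lambda>_. False) (L, int (L - 1), ?block (L - 1))"
    by simp
  also have "tm_reach (doubler L) \<dots> (L + 6, int L, doubler_tape L 0)"
    by (rule tm_reach_step[where w=True and d=True])
      (use assms in \<open>auto simp: doubler_def doubler_tape_def fun_eq_iff\<close>)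
  finally show ?thesis .
qed

lemma doubler_round:
  assumes "p < L"
  shows "tm_reach (doubler L) (L + 6, int L, doubler_tape L p) (L + 6, int L, doubler_tape L (Suc p))"
proof -
  let ?M = "doubler L" and ?t = "doubler_tape L p"
  let ?t' = "?t(int p := False)"
  let ?t'' = "?t'(int L + 1 + 2 * int p := True)"
  have "tm_reach ?M (L + 6, int L, ?t) (L + 1, int L - 1, ?t)"
    by (rule tm_reach_step[where w=False and d=False])
      (use assms in \<open>auto simp: doubler_def doubler_tape_def fun_eq_iff\<close>)
  also have "tm_reach ?M \<dots> (L + 1, int p - 1, ?t)"
    by (rule tm_reach_scan_left) (use assms in \<open>auto simp: doubler_def doubler_tape_def\<close>)
  also have "tm_reach ?M \<dots> (L + 2, int p, ?t)"
    by (rule tm_reach_step[where w=False and d=True])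
      (use assms in \<open>auto simp: doubler_def doubler_tape_def fun_eq_iff\<close>)
  also have "tm_reach ?M \<dots> (L + 3, int p + 1, ?t')"
    by (rule tm_reach_step[where w=False and d=True])
      (use assms in \<open>auto simp: doubler_def doubler_tape_def\<close>)
  also have "tm_reach ?M \<dots> (L + 3, int L, ?t')"
    by (rule tm_reach_scan_right) (use assms in \<open>auto simp: doubler_def doubler_tape_def\<close>)
  also have "tm_reach ?M \<dots> (L + 4, int L + 1, ?t')"
    by (rule tm_reach_step[where w=False and d=True])
      (use assms in \<open>auto simp: doubler_def doubler_tape_def fun_eq_iff\<close>)
  also have "tm_reach ?M \<dots> (L + 4, int L + 1 + 2 * int p, ?t')"
    by (rule tm_reach_scan_right) (use assms in \<open>auto simp: doubler_def doubler_tape_def\<close>)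
  also have "tm_reach ?M \<dots> (L + 5, int L + 2 + 2 * int p, ?t'')"
    by (rule tm_reach_step[where w=True and d=True])
      (use assms in \<open>auto simp: doubler_def doubler_tape_def\<close>)
  also have "tm_reach ?M \<dots> (L + 6, int L + 1 + 2 * int p, doubler_tape L (Suc p))"
    by (rule tm_reach_step[where w=True and d=False])
      (use assms in \<open>auto simp: doubler_def doubler_tape_def fun_eq_iff\<close>)
  also have "tm_reach ?M \<dots> (L + 6, int L, doubler_tape L (Suc p))"
    by (rule tm_reach_scan_left) (use assms in \<open>auto simp: doubler_def doubler_tape_def\<close>)
  finally show ?thesis .
qed

lemma doubler_rounds:
  "p \<le> L \<Longrightarrow> tm_reach (doubler L) (L + 6, int L, doubler_tape L 0) (L + 6, int L, doubler_tape L p)"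
proof (induction p)
  case 0
  then show ?case by (simp add: tm_reach_refl)
next
  case (Suc p)
  then show ?case
    using doubler_round[of p L] tm_reach_trans by simp
qed

lemma doubler_halts:
  assumes "1 \<le> L"
  shows "tm_reach (doubler L) (1, 0, \<lambda>_. False) (0, int L + 1, doubler_tape L L)"
proof -
  let ?M = "doubler L" and ?t = "doubler_tape L L"
  have "tm_reach ?M (1, 0, \<lambda>_. False) (L + 6, int L, doubler_tape L 0)"
    using assms by (rule doubler_writes_block)
  also have "tm_reach ?M \<dots> (L + 6, int L, ?t)"
    by (rule doubler_rounds) simp
  also have "tm_reach ?M \<dots> (L + 1, int L - 1, ?t)"
    by (rule tm_reach_step[where w=False and d=False])
      (use assms in \<open>auto simp: doubler_def doubler_tape_def fun_eq_iff\<close>)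
  also have "tm_reach ?M \<dots> (L + 2, int L, ?t)"
    by (rule tm_reach_step[where w=False and d=True])
      (use assms in \<open>auto simp: doubler_def doubler_tape_def fun_eq_iff\<close>)
  also have "tm_reach ?M \<dots> (0, int L + 1, ?t)"
    by (rule tm_reach_step[where w=False and d=True])
      (use assms in \<open>auto simp: doubler_def doubler_tape_def fun_eq_iff\<close>)
  finally show ?thesis .
qed

lemma double_le_busy_beaver:
  assumes "1 \<le> L"
  shows "2 * L \<le> busy_beaver (L + 6)"
proof -
  obtain k where run: "tm_run (doubler L) k = (0, int L + 1, doubler_tape L L)"
    using tm_reach_imp_run[OF doubler_halts[OF assms]] by blast
  have "{x. doubler_tape L L x} = {int L + 1 ..< int L + 1 + 2 * int L}"
    by (auto simp: doubler_tape_def)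
  then have "tm_ones (tm_run (doubler L) k) = 2 * L"
    using run by (simp add: tm_ones_def)
  moreover have "tm_ones (tm_run (doubler L) k) \<le> busy_beaver (L + 6)"
    by (rule le_busy_beaver[of "L + 6"]) (use doubler_valid run in auto)
  ultimately show ?thesis by simp
qed

section \<open>Finite models of T_varsigma\<close>

lemma le_card_if_psi_ge:
  assumes "finite D" "psi_ge D n"
  shows "n \<le> card D"
proof -
  obtain x where x: "x ` {1..n} \<subseteq> D" "inj_on x {1..n}"
    using assms(2) by (auto simp: psi_ge_def)
  then have "card (x ` {1..n}) = n"
    by (simp add: card_image)
  moreover have "card (x ` {1..n}) \<le> card D"
    using assms(1) x(1) by (rule card_mono)
  ultimately show ?thesis
    by simp
qed

lemma card_le_if_psi_le:
  assumes "psi_le D n"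
  shows "card D \<le> n"
proof -
  obtain x where "\<forall>y\<in>D. \<exists>i\<in>{1..n}. y = x i"
    using assms unfolding psi_le_def by blast
  then have "D \<subseteq> x ` {1..n}"
    by blast
  then have "card D \<le> card (x ` {1..n})"
    by (simp add: card_mono)
  also have "\<dots> \<le> n"
    using card_image_le[of "{1..n}" x] by simp
  finally show ?thesis .
qed

lemma psi_eq_iff_card:
  assumes "finite D"
  shows "psi_eq D n \<longleftrightarrow> card D = n"
proof
  assume "psi_eq D n"
  then show "card D = n"
    using le_card_if_psi_ge[OF assms] card_le_if_psi_le unfolding psi_eq_def
    by (meson le_antisym)
next
  assume "card D = n"
  then obtain x where "bij_betw x {1..n} D"
    using ex_bij_betw_nat_finite_1[OF assms] by blast
  then show "psi_eq D n"
    unfolding psi_eq_def psi_ge_def psi_le_def bij_betw_def by blast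
qed

lemma T_bb_interp_if_card_busy_beaver_2:
  assumes "finite D" "card D = busy_beaver 2" "range v \<subseteq> D"
  shows "T_bb_interp D v"
proof -
  have "D \<noteq> {}"
    using assms(1,2) one_le_busy_beaver[of 2] by auto
  moreover have "psi_eq D (busy_beaver 2)"
    using psi_eq_iff_card[OF assms(1)] assms(2) by simp
  ultimately show ?thesis
    using assms(3) unfolding T_bb_interp_def is_interp_def by force
qed

lemma card_T_bb_interp_in_range:
  assumes "T_bb_interp D v" "finite D" "2 \<le> n" "card D < busy_beaver n"
  shows "card D \<in> busy_beaver ` {2..n}"
proof -
  have n: "n = (n - 2) + 2"
    using assms(3) by simp
  have "\<not> psi_ge D (busy_beaver n)"
    using le_card_if_psi_ge[OF assms(2)] assms(4) by fastforce
  then obtain i where "i \<in> {2..n}" "psi_eq D (busy_beaver i)"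
    using assms(1) n unfolding T_bb_interp_def by metis
  then show ?thesis
    using psi_eq_iff_card[OF assms(2)] by auto
qed

lemma gap_in_image:
  fixes f :: "nat \<Rightarrow> nat"
  assumes "a \<le> b" "f a + (b - a) < f b"
  shows "\<exists>m. f a < m \<and> m < f b \<and> m \<notin> f ` {a..b}"
proof -
  have "a < b"
    using assms by (cases "a = b") auto
  have "card (f ` {a<..<b}) \<le> b - a - 1"
    using card_image_le[of "{a<..<b}" f] by simp
  also have "\<dots> < card {f a<..<f b}"
    using assms \<open>a < b\<close> by simp
  finally have "\<not> {f a<..<f b} \<subseteq> f ` {a<..<b}"
    by (meson card_mono finite_imageI finite_greaterThanLessThan not_le)
  then obtain m where "m \<in> {f a<..<f b}" "m \<notin> f ` {a<..<b}"
    by blast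
  moreover have "{a..b} \<subseteq> {a<..<b} \<union> {a, b}"
    by auto
  ultimately show ?thesis
    by auto
qed

theorem lemma50:
  assumes "infinite (UNIV :: 'a set)"
  shows "\<not> smooth_T_bb TYPE('a)"
proof
  assume smooth: "smooth_T_bb TYPE('a)"
  define b where "b = busy_beaver 2"
  define L where "L = b + 5"
  have "2 * L \<le> busy_beaver (L + 6)"
    using double_le_busy_beaver[of L] by (simp add: L_def)
  then obtain m where m: "b < m" "m < busy_beaver (L + 6)" "m \<notin> busy_beaver ` {2..L + 6}"
    using gap_in_image[where f = busy_beaver and a = 2 and b = "L + 6"]
    unfolding b_def L_def by auto
  obtain D :: "'a set" where D: "finite D" "card D = b"
    using infinite_arbitrarily_large[OF assms] by blast
  obtain K :: "'a set" where K: "finite K" "card K = m"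
    using infinite_arbitrarily_large[OF assms] by blast
  obtain d where "d \<in> D"
    using D one_le_busy_beaver[of 2] unfolding b_def by fastforce
  then have "T_bb_interp D (\<lambda>_. d)"
    using D by (intro T_bb_interp_if_card_busy_beaver_2) (auto simp: b_def)
  moreover have "D \<lesssim> K"
    using D K m(1) by (simp add: lepoll_iff_card_le)
  ultimately obtain D' :: "'a set" and v' where D': "T_bb_interp D' v'" "D' \<approx> K"
    using smooth qf_sat.simps(1)[of "\<lambda>_. d" 0 0] unfolding smooth_T_bb_def by blast
  then have "finite D'" "card D' = m"
    using K eqpoll_finite_iff eqpoll_iff_card by blast+
  then show False
    using card_T_bb_interp_in_range[OF D'(1), of "L + 6"] m by auto
qed

end
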